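(* Let $\mathcal{A}$ be a separating union-closed family with base set $[n]$ and height $h$, and suppose $h = 4 \leq n$ and $0 \leq |\mathcal{B}(\mathcal{A})| \leq 2$. Then \[\mathrm{Avg}(\mathcal{A})=\frac{\sum_{A \in \mathcal{A}}|A|}{|\mathcal{A}|} \geq \frac{n}{2}.\]
   Context: A family of sets $\mathcal{A}$ is union-closed if it is a finite family of distinct finite sets with at least one nonempty member set, and $X,Y\in\mathcal{A}$ implies $X\cup Y\in\mathcal{A}$ (the empty set may be a member). For a family $\mathcal{F}$, $b(\mathcal{F})=\bigcup_{F\in\mathcal{F}}F$; the base set $b(\mathcal{A})$ is denoted $[n]=\{1,\dots,n\}$. $\mathcal{A}$ is separating if for any two distinct $x,y\in[n]$ there is $A\in\mathcal{A}$ containing exactly one of $x,y$. A chain in $\mathcal{A}$ is a subfamily any two distinct members of which are comparable under proper inclusion; the height $h$ of $\mathcal{A}$ is the maximum size of a chain in $\mathcal{A}$. For real $x\ge 0$, $\mathcal{A}_{<x}=\{A\in\mathcal{A} : |A|<x\}$. For $\mathcal{S}\subseteq\mathcal{A}$ and $S\in\mathcal{S}$, $\mathrm{irr}_{\mathcal{S}}(S)=\{s\in S : s\notin b(\mathcal{S}\setminus\{S\})\}$, and $\mathcal{S}$ is irredundant if $\mathrm{irr}_{\mathcal{S}}(S)\neq\emptyset$ for every $S\in\mathcal{S}$. Set $B=b(\mathcal{A}_{<n/2})$, and let $\mathcal{B}=\mathcal{B}(\mathcal{A})$ denote any irredundant subfamily of $\mathcal{A}_{<n/2}$ of minimum size such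 that $b(\mathcal{B})=B$ (so $|\mathcal{B}|$ is well defined). $\mathrm{Avg}(\mathcal{A})$ denotes the average size of a member set of $\mathcal{A}$. *)

theory Defs
  imports Complex_Main
begin

definition union_closed :: "'a set set \<Rightarrow> bool" where
  "union_closed \<A> \<longleftrightarrow> finite \<A> \<and> (\<forall>A\<in>\<A>. finite A) \<and> (\<exists>A\<in>\<A>. A \<noteq> {})
     \<and> (\<forall>X\<in>\<A>. \<forall>Y\<in>\<A>. X \<union> Y \<in> \<A>)"

definition separating :: "'a set set \<Rightarrow> bool" where
  "separating \<A> \<longleftrightarrow> (\<forall>x\<in>\<Union>\<A>. \<forall>y\<in>\<Union>\<A>. x \<noteq> y \<longrightarrow>
     (\<exists>A\<in>\<A>. (x \<in> A \<and> y \<notin> A) \<or> (y \<in> A \<and> x \<notin> A)))"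

definition is_chain :: "'a set set \<Rightarrow> bool" where
  "is_chain \<C> \<longleftrightarrow> (\<forall>X\<in>\<C>. \<forall>Y\<in>\<C>. X \<noteq> Y \<longrightarrow> X \<subset> Y \<or> Y \<subset> X)"

definition height :: "'a set set \<Rightarrow> nat" where
  "height \<A> = Max {card \<C> | \<C>. \<C> \<subseteq> \<A> \<and> is_chain \<C>}"

definition below :: "'a set set \<Rightarrow> real \<Rightarrow> 'a set set" where
  "below \<A> x = {A \<in> \<A>. real (card A) < x}"

definition irr :: "'a set set \<Rightarrow> 'a set \<Rightarrow> 'a set" where
  "irr \<S> S = {s \<in> S. s \<notin> \<Union>(\<S> - {S})}"

definition irredundant :: "'a set set \<Rightarrow> bool" where
  "irredundant \<S> \<longleftrightarrow> (\<forall>S\<in>\<S>. irr \<S> S \<noteq> {})"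

definition B_size :: "'a set set \<Rightarrow> nat" where
  "B_size \<A> = (let n = card (\<Union>\<A>); L = below \<A> (real n / 2) in
     Min {card \<S> | \<S>. \<S> \<subseteq> L \<and> irredundant \<S> \<and> \<Union>\<S> = \<Union>L})"

definition Avg :: "'a set set \<Rightarrow> real" where
  "Avg \<A> = (\<Sum>A\<in>\<A>. real (card A)) / real (card \<A>)"

end

theory Submission
  imports Defs
begin

(* Write excess X = 2|X| - n; the claim is that the excesses of the members have nonnegative sum.
  Only members of size below n/2 have negative excess, and they all lie in their union B, which
  is itself a member. Height 4 excludes strict chains of five members, so two members strictly
  below a member Z that has two members above it, or that has one member above it while the two
  share a strict lower bound, must have union Z; then their deficits in Z are disjoint.
  If B misses two points of [n], some member lies strictly between B and [n]. The deficits of the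
  small members are then paid for by [n], by B and by the coatoms [n] - {x} with x outside B, all
  but at most one of which are members.
  If B misses a single point, the cover of B by at most two small members splits it into disjoint
  halves S1, S2 of size m, with n = 2m + 1. The other small members are the empty set, members
  inside one half, or members crossing both halves, and each of them is compensated by its lifts
  S2 \<union> X and S1 \<union> X, which lie strictly between a half and B. *)

lemma union_closed_Union_mem:
  assumes "union_closed F" "G \<subseteq> F" "G \<noteq> {}"
  shows "\<Union>G \<in> F"
proof -
  have "finite G" using assms(1,2) finite_subset unfolding union_closed_def by blast
  then show ?thesis using assms(3,2)
  proof (induction G rule: finite_ne_induct)
    case (singleton X) then show ?case by simp
  next
    case (insert X G) then show ?case using assms(1) unfolding union_closed_def by simp
  qed
qed

lemma sum_card_Diff_le_of_pairwise_Un: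
  assumes "finite Z" "finite X" "\<And>A. A \<in> X \<Longrightarrow> W \<subseteq> A"
    and "\<And>A C. A \<in> X \<Longrightarrow> C \<in> X \<Longrightarrow> A \<noteq> C \<Longrightarrow> A \<union> C = Z"
  shows "(\<Sum>A\<in>X. card (Z - A)) \<le> card (Z - W)"
proof -
  have "(\<Sum>A\<in>X. card (Z - A)) = card (\<Union>A\<in>X. Z - A)"
    by (rule card_UN_disjoint[symmetric]) (use assms in auto)
  also have "\<dots> \<le> card (Z - W)"
    by (rule card_mono) (use assms in auto)
  finally show ?thesis .
qed

lemma card_le_sum_card_Diff:
  assumes "finite Z" "\<And>A. A \<in> X \<Longrightarrow> A \<subset> Z"
  shows "card X \<le> (\<Sum>A\<in>X. card (Z - A))"
proof -
  have "card X = (\<Sum>A\<in>X. 1)" by simp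
  also have "\<dots> \<le> (\<Sum>A\<in>X. card (Z - A))"
  proof (rule sum_mono)
    fix A assume "A \<in> X"
    then have "Z - A \<noteq> {}" using assms(2) by blast
    then show "1 \<le> card (Z - A)" using assms(1) by (simp add: Suc_le_eq card_gt_0_iff)
  qed
  finally show ?thesis .
qed

lemma sum_fst_le_card_snd_mult_sum:
  fixes f :: "'b \<Rightarrow> nat"
  assumes "finite G" "inj_on (\<lambda>x. (\<alpha> x, \<beta> x)) G"
  shows "(\<Sum>x\<in>G. f (\<alpha> x)) \<le> card (\<beta> ` G) * (\<Sum>u\<in>\<alpha> ` G. f u)"
proof -
  let ?\<pi> = "\<lambda>x. (\<alpha> x, \<beta> x)"
  have "(\<Sum>x\<in>G. f (\<alpha> x)) = (\<Sum>p\<in>?\<pi> ` G. f (fst p))"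
    using sum.reindex[OF assms(2), of "\<lambda>p. f (fst p)"] by simp
  also have "\<dots> \<le> (\<Sum>p\<in>\<alpha> ` G \<times> \<beta> ` G. f (fst p))"
    by (rule sum_mono2) (use assms(1) in auto)
  also have "\<dots> = (\<Sum>u\<in>\<alpha> ` G. \<Sum>v\<in>\<beta> ` G. f u)"
    by (subst sum.cartesian_product) (simp add: case_prod_beta')
  also have "\<dots> = card (\<beta> ` G) * (\<Sum>u\<in>\<alpha> ` G. f u)"
    by (simp add: sum_distrib_left)
  finally show ?thesis .
qed

lemma sum_snd_le_card_fst_mult_sum:
  fixes f :: "'b \<Rightarrow> nat"
  assumes "finite G" "inj_on (\<lambda>x. (\<alpha> x, \<beta> x)) G"
  shows "(\<Sum>x\<in>G. f (\<beta> x)) \<le> card (\<alpha> ` G) * (\<Sum>v\<in>\<beta> ` G. f v)"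
proof -
  have "inj_on (\<lambda>x. (\<beta> x, \<alpha> x)) G" using assms(2) by (auto simp: inj_on_def)
  then show ?thesis by (rule sum_fst_le_card_snd_mult_sum[OF assms(1)])
qed

lemma exists_irredundant_cover:
  assumes "finite L"
  shows "\<exists>S\<subseteq>L. irredundant S \<and> \<Union>S = \<Union>L"
proof -
  define covers where "covers S \<longleftrightarrow> S \<subseteq> L \<and> \<Union>S = \<Union>L" for S
  obtain S where S: "covers S" and least: "\<And>T. covers T \<Longrightarrow> card S \<le> card T"
    using ex_has_least_nat[of covers L card] unfolding covers_def by blast
  have "finite S" using S assms finite_subset unfolding covers_def by blast
  have "irr S T \<noteq> {}" if "T \<in> S" for T
  proof
    assume "irr S T = {}"
    then have "covers (S - {T})" using S \<open>T \<in> S\<close> unfolding covers_def irr_def by blast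
    then show False
      using least card_Diff1_less[OF \<open>finite S\<close> \<open>T \<in> S\<close>] by fastforce
  qed
  then show ?thesis using S unfolding covers_def irredundant_def by blast
qed

lemma B_size_cover:
  assumes "finite \<A>" "B_size \<A> \<le> k"
  defines "L \<equiv> below \<A> (real (card (\<Union>\<A>)) / 2)"
  obtains S where "S \<subseteq> L" "\<Union>S = \<Union>L" "card S \<le> k"
proof -
  define sizes where "sizes = {card S | S. S \<subseteq> L \<and> irredundant S \<and> \<Union>S = \<Union>L}"
  have "finite L" using assms(1) unfolding L_def below_def by simp
  then have "finite sizes" unfolding sizes_def by simp
  moreover have "sizes \<noteq> {}"
    using exists_irredundant_cover[OF \<open>finite L\<close>] unfolding sizes_def by blast
  ultimately have "Min sizes \<in> sizes" by (rule Min_in)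
  moreover have "B_size \<A> = Min sizes" unfolding B_size_def sizes_def L_def Let_def ..
  ultimately have "B_size \<A> \<in> sizes" by simp
  then show ?thesis using that assms(2) unfolding sizes_def by fastforce
qed

lemma Avg_ge_half_if_excess_sum_nonneg:
  assumes "finite \<A>" "\<A> \<noteq> {}" "0 \<le> (\<Sum>X\<in>\<A>. 2 * int (card X) - int n)"
  shows "real n / 2 \<le> Avg \<A>"
proof -
  have "0 \<le> (\<Sum>X\<in>\<A>. 2 * real (card X) - real n)"
  proof -
    have "real_of_int (\<Sum>X\<in>\<A>. 2 * int (card X) - int n) = (\<Sum>X\<in>\<A>. 2 * real (card X) - real n)"
      by (simp add: of_int_sum)
    then show ?thesis using assms(3) by (metis of_int_0_le_iff)
  qed
  then have "real (card \<A>) * real n \<le> 2 * (\<Sum>X\<in>\<A>. real (card X))"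
    by (simp add: sum_subtractf sum_distrib_left)
  moreover have "0 < real (card \<A>)" using assms(1,2) by (simp add: card_gt_0_iff)
  ultimately show ?thesis unfolding Avg_def by (simp add: field_simps)
qed

(* b = |B|, s counts the small members below B, and n - b - 1 bounds the coatoms from below. *)
lemma gap_excess_arith:
  fixes b n s :: int
  assumes "4 \<le> n" "2 * b < n" "0 \<le> s" "s \<le> b"
  shows "0 \<le> s * (2 * b - n) + (n - b - 1) * (n - 2)"
proof -
  have "b * (2 * b - n) \<le> s * (2 * b - n)" using assms by (intro mult_right_mono_neg) auto
  moreover have "b * (2 * b - n) + (n - b - 1) * (n - 2) = 2 * (b - 1)^2 + (n - 2 * b) * (n - 3)"
    by (simp add: algebra_simps power2_eq_square)
  moreover have "0 \<le> (n - 2 * b) * (n - 3)" "0 \<le> (b - 1)^2" using assms by simp_all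
  ultimately show ?thesis by linarith
qed

(* g counts the crossing members and p, q their two kinds of lifts; s, e, f are the total
  deficits in B of the crossing members and of the two kinds of lifts. *)
lemma crossing_excess_arith:
  fixes m g p q s e f :: int
  assumes "2 \<le> m" "1 \<le> p" "1 \<le> q" "p \<le> g" "q \<le> g" "e \<le> m" "f \<le> m"
    and "s \<le> q * e + p * f" "s \<le> g * (2 * m - 2)"
  shows "0 \<le> 4 * m - 2 + (g + p + q) * (2 * m - 1) - 2 * s - 2 * e - 2 * f"
proof -
  have "(g + p + q) * (2 * m - 1) = 2 * (g * m) + 2 * (p * m) + 2 * (q * m) - g - p - q"
    "g * (2 * m - 2) = 2 * (g * m) - 2 * g"
    by (simp_all add: algebra_simps)
  moreover have "q * e \<le> q * m" "p * f \<le> p * m" "p * 2 \<le> p * m" "q * 2 \<le> q * m"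
    using assms by (simp_all add: mult_left_mono)
  ultimately show ?thesis
    using assms by (cases "p + q + 2 \<le> 2 * (g * m) - g") linarith+
qed

locale height_four_family =
  fixes F :: "nat set set" and n :: nat
  assumes union_closed: "union_closed F" and separating: "separating F"
    and Union_F: "\<Union>F = {1..n}" and height_F: "height F = 4" and four_le_n: "4 \<le> n"
begin

definition excess :: "nat set \<Rightarrow> int" where
  "excess X = 2 * int (card X) - int n"

lemma finite_F: "finite F"
  using union_closed unfolding union_closed_def by blast

lemma member_subset: "X \<in> F \<Longrightarrow> X \<subseteq> {1..n}"
  using Union_F by blast

lemma finite_member: "X \<in> F \<Longrightarrow> finite X"
  using member_subset finite_subset by blast

lemma Un_mem: "X \<in> F \<Longrightarrow> Y \<in> F \<Longrightarrow> X \<union> Y \<in> F"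
  using union_closed unfolding union_closed_def by blast

lemma top_mem: "{1..n} \<in> F"
proof -
  have "F \<noteq> {}" using union_closed unfolding union_closed_def by blast
  then show ?thesis using union_closed_Union_mem[OF union_closed, of F] Union_F by simp
qed

lemma separatingE:
  assumes "x \<in> {1..n}" "y \<in> {1..n}" "x \<noteq> y"
  obtains E where "E \<in> F" "x \<in> E" "y \<notin> E" | E where "E \<in> F" "y \<in> E" "x \<notin> E"
  using separating assms Union_F unfolding separating_def by metis

lemma exists_between_if_two_missing:
  assumes "B \<in> F" "y \<in> {1..n} - B" "z \<in> {1..n} - B" "y \<noteq> z"
  obtains C where "C \<in> F" "B \<subset> C" "C \<subset> {1..n}"
proof -
  from assms(2-4) consider E where "E \<in> F" "z \<in> E" "y \<notin> E" | E where "E \<in> F" "y \<in> E" "z \<notin> E"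
    by (metis DiffD1 separatingE)
  then show ?thesis
  proof cases
    case 1
    then have "B \<subset> B \<union> E" "B \<union> E \<subset> {1..n}" using assms member_subset by blast+
    then show ?thesis using that[OF Un_mem[OF assms(1) 1(1)]] by blast
  next
    case 2
    then have "B \<subset> B \<union> E" "B \<union> E \<subset> {1..n}" using assms member_subset by blast+
    then show ?thesis using that[OF Un_mem[OF assms(1) 2(1)]] by blast
  qed
qed

lemma card_chain_le_4:
  assumes "C \<subseteq> F" "is_chain C"
  shows "card C \<le> 4"
proof -
  have "finite {card C | C. C \<subseteq> F \<and> is_chain C}"
    using finite_F by simp
  moreover have "card C \<in> {card C | C. C \<subseteq> F \<and> is_chain C}" using assms by blast
  ultimately have "card C \<le> height F" unfolding height_def by (rule Max_ge)
  then show ?thesis using height_F by simp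
qed

lemma no_strict_chain5:
  assumes "a \<in> F" "b \<in> F" "c \<in> F" "d \<in> F" "e \<in> F"
    and "a \<subset> b" "b \<subset> c" "c \<subset> d" "d \<subset> e"
  shows False
proof -
  have "is_chain {a, b, c, d, e}" unfolding is_chain_def using assms(6-9) by blast
  moreover have "card {a, b, c, d, e} = 5"
  proof -
    have "a \<noteq> b" "a \<noteq> c" "a \<noteq> d" "a \<noteq> e" "b \<noteq> c" "b \<noteq> d" "b \<noteq> e"
      "c \<noteq> d" "c \<noteq> e" "d \<noteq> e" using assms(6-9) by blast+
    then show ?thesis by simp
  qed
  ultimately show False using card_chain_le_4[of "{a, b, c, d, e}"] assms(1-5) by simp
qed

lemma strict_pair_below_if_Un_ne:
  assumes "X \<in> F" "X' \<in> F" "X \<noteq> X'" "X \<subset> Z" "X' \<subset> Z" "X \<union> X' \<noteq> Z"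
  obtains P Y where "P \<in> {X, X'}" "Y \<in> F" "P \<subset> Y" "Y \<subset> Z"
proof (cases "X' \<subseteq> X")
  case True
  with assms have "X' \<subset> X" by blast
  with assms(1,4) show ?thesis by (intro that[of X' X]) auto
next
  case False
  with assms have "X \<subset> X \<union> X'" "X \<union> X' \<subset> Z" by blast+
  with assms(1,2) Un_mem show ?thesis by (intro that[of X "X \<union> X'"]) auto
qed

lemma Un_eq_of_two_above:
  assumes "X \<in> F" "X' \<in> F" "Z \<in> F" "C \<in> F" "D \<in> F" "X \<noteq> X'"
    and "X \<subset> Z" "X' \<subset> Z" "Z \<subset> C" "C \<subset> D"
  shows "X \<union> X' = Z"
proof (rule ccontr)
  assume "X \<union> X' \<noteq> Z"
  with assms obtain P Y where "P \<in> {X, X'}" "Y \<in> F" "P \<subset> Y" "Y \<subset> Z"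
    by (metis strict_pair_below_if_Un_ne)
  then show False using no_strict_chain5[of P Y Z C D] assms by blast
qed

lemma Un_eq_of_common_below:
  assumes "W \<in> F" "X \<in> F" "X' \<in> F" "Z \<in> F" "C \<in> F" "X \<noteq> X'"
    and "W \<subset> X" "W \<subset> X'" "X \<subset> Z" "X' \<subset> Z" "Z \<subset> C"
  shows "X \<union> X' = Z"
proof (rule ccontr)
  assume "X \<union> X' \<noteq> Z"
  with assms obtain P Y where "P \<in> {X, X'}" "Y \<in> F" "P \<subset> Y" "Y \<subset> Z"
    by (metis strict_pair_below_if_Un_ne)
  then show False using no_strict_chain5[of W P Y Z C] assms by blast
qed

lemma excess_sum_ge_subfamily:
  assumes "K \<subseteq> F" "\<And>X. X \<in> F \<Longrightarrow> 2 * card X < n \<Longrightarrow> X \<in> K"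
  shows "(\<Sum>X\<in>K. excess X) \<le> (\<Sum>X\<in>F. excess X)"
  by (rule sum_mono2[OF finite_F assms(1)]) (use assms(2) in \<open>force simp: excess_def\<close>)

lemma sum_excess_subsets:
  assumes "finite Z" "\<And>Y. Y \<in> S \<Longrightarrow> Y \<subseteq> Z"
  shows "(\<Sum>Y\<in>S. excess Y) = int (card S) * excess Z - 2 * int (\<Sum>Y\<in>S. card (Z - Y))"
proof -
  have "excess Y = excess Z - 2 * int (card (Z - Y))" if "Y \<in> S" for Y
    using assms that card_Diff_subset[of Y Z] card_mono[of Z Y] finite_subset[of Y Z]
    unfolding excess_def by simp
  then show ?thesis by (simp add: sum_subtractf sum_distrib_left of_nat_sum)
qed

lemma sum_excess_ge_of_pairwise_Un:
  assumes "S \<subseteq> F" "finite Z" "\<And>Y. Y \<in> S \<Longrightarrow> W \<subseteq> Y \<and> Y \<subseteq> Z"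
    and "\<And>Y Y'. Y \<in> S \<Longrightarrow> Y' \<in> S \<Longrightarrow> Y \<noteq> Y' \<Longrightarrow> Y \<union> Y' = Z"
  shows "int (card S) * excess Z - 2 * int (card (Z - W)) \<le> (\<Sum>Y\<in>S. excess Y)"
proof -
  have "finite S" using assms(1) finite_F finite_subset by blast
  then have "(\<Sum>Y\<in>S. card (Z - Y)) \<le> card (Z - W)"
    using sum_card_Diff_le_of_pairwise_Un[OF assms(2)] assms(3,4) by blast
  moreover have "(\<Sum>Y\<in>S. excess Y) = int (card S) * excess Z - 2 * int (\<Sum>Y\<in>S. card (Z - Y))"
    using sum_excess_subsets[OF assms(2)] assms(3) by blast
  ultimately show ?thesis by linarith
qed

lemma subset_if_coatom_missing:
  assumes "A \<in> F" "A \<subset> B" "B \<in> F" "x \<in> {1..n}" "x \<notin> B" "{1..n} - {x} \<notin> F"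
    and "D \<in> F" "x \<notin> D"
  shows "D \<subseteq> B"
proof (rule ccontr)
  assume "\<not> D \<subseteq> B"
  \<comment> \<open>\<open>M\<close> is the largest member avoiding \<open>x\<close>; a point outside \<open>M\<close> other than \<open>x\<close> would
    extend \<open>A \<subset> B \<subset> M\<close> to a strict chain of five members.\<close>
  define M where "M = \<Union>{D \<in> F. x \<notin> D}"
  have M_mem: "M \<in> F"
    unfolding M_def by (rule union_closed_Union_mem[OF union_closed]) (use assms(3,5) in blast)+
  have "x \<notin> M" unfolding M_def by blast
  have "B \<subset> M" unfolding M_def using assms(3,5,7,8) \<open>\<not> D \<subseteq> B\<close> by blast
  have "M \<subseteq> {1..n} - {x}" using member_subset[OF M_mem] \<open>x \<notin> M\<close> by blast
  moreover have "M \<noteq> {1..n} - {x}" using M_mem assms(6) by blast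
  ultimately obtain y where y: "y \<in> {1..n}" "y \<noteq> x" "y \<notin> M" by blast
  with assms(4) consider E where "E \<in> F" "x \<in> E" "y \<notin> E" | E where "E \<in> F" "y \<in> E" "x \<notin> E"
    by (metis separatingE)
  then show False
  proof cases
    case 1
    then have "M \<subset> M \<union> E" "M \<union> E \<subset> {1..n}"
      using \<open>x \<notin> M\<close> y member_subset[OF M_mem] member_subset[of E] by blast+
    with 1 show False
      using no_strict_chain5[OF assms(1,3) M_mem Un_mem[OF M_mem] top_mem assms(2) \<open>B \<subset> M\<close>]
      by blast
  next
    case 2
    then have "E \<subseteq> M" unfolding M_def by blast
    then show False using 2 y by blast
  qed
qed

lemma card_missing_coatoms_le_1:
  assumes "A \<in> F" "A \<subset> B" "B \<in> F"
  shows "card {x \<in> {1..n} - B. {1..n} - {x} \<notin> F} \<le> 1"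
proof -
  have "a = b" if a: "a \<in> {1..n} - B" "{1..n} - {a} \<notin> F" and b: "b \<in> {1..n} - B" "{1..n} - {b} \<notin> F"
    for a b
  proof (rule ccontr)
    assume "a \<noteq> b"
    with a b consider E where "E \<in> F" "a \<in> E" "b \<notin> E" | E where "E \<in> F" "b \<in> E" "a \<notin> E"
      by (metis DiffD1 separatingE)
    then show False
    proof cases
      case 1
      then show False using subset_if_coatom_missing[OF assms, of b E] a b by blast
    next
      case 2
      then show False using subset_if_coatom_missing[OF assms, of a E] a b by blast
    qed
  qed
  then show ?thesis by (auto simp: card_le_Suc0_iff_eq)
qed

lemma card_coatoms_ge:
  assumes "A \<in> F" "A \<subset> B" "B \<in> F"
  shows "n - card B - 1 \<le> card {X \<in> F. \<exists>x \<in> {1..n} - B. X = {1..n} - {x}}"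
proof -
  define present where "present = {x \<in> {1..n} - B. {1..n} - {x} \<in> F}"
  define missing where "missing = {x \<in> {1..n} - B. {1..n} - {x} \<notin> F}"
  have "n - card B = card ({1..n} - B)"
    using member_subset[OF assms(3)] by (simp add: card_Diff_subset finite_subset)
  also have "{1..n} - B = present \<union> missing" unfolding present_def missing_def by blast
  also have "card (present \<union> missing) \<le> card present + card missing" by (rule card_Un_le)
  finally have "n - card B - 1 \<le> card present"
    using card_missing_coatoms_le_1[OF assms] unfolding missing_def by linarith
  also have "card present = card ((\<lambda>x. {1..n} - {x}) ` present)"
    by (rule card_image[symmetric]) (unfold inj_on_def present_def, blast)
  also have "(\<lambda>x. {1..n} - {x}) ` present = {X \<in> F. \<exists>x \<in> {1..n} - B. X = {1..n} - {x}}"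
    unfolding present_def by blast
  finally show ?thesis .
qed

lemma excess_sum_ge_with_top:
  assumes "B \<in> F" "B \<subset> {1..n}" "K \<subseteq> F" "{1..n} \<notin> K" "B \<notin> K"
    and "\<And>X. X \<in> F \<Longrightarrow> 2 * card X < n \<Longrightarrow> X = B \<or> X \<in> K"
  shows "2 * int (card B) + (\<Sum>X\<in>K. excess X) \<le> (\<Sum>X\<in>F. excess X)"
proof -
  have "finite K" using assms(3) finite_F finite_subset by blast
  have "(\<Sum>X\<in>insert {1..n} (insert B K). excess X) \<le> (\<Sum>X\<in>F. excess X)"
    by (rule excess_sum_ge_subfamily) (use assms top_mem in blast)+
  then show ?thesis using assms(2,4,5) \<open>finite K\<close> by (simp add: excess_def)
qed

lemma excess_sum_ge_with_coatoms:
  assumes "A \<in> F" "A \<subset> B" "B \<in> F" "2 * card B < n" "K \<subseteq> F" "{1..n} \<notin> K" "B \<notin> K"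
    and K_small: "\<And>X. X \<in> K \<Longrightarrow> 2 * card X < n"
    and small_cases: "\<And>X. X \<in> F \<Longrightarrow> 2 * card X < n \<Longrightarrow> X = B \<or> X \<in> K"
  shows "2 * int (card B) + (\<Sum>X\<in>K. excess X) + (int n - int (card B) - 1) * (int n - 2)
    \<le> (\<Sum>X\<in>F. excess X)"
proof -
  define Co where "Co = {X \<in> F. \<exists>x \<in> {1..n} - B. X = {1..n} - {x}}"
  have "Co \<subseteq> F" unfolding Co_def by blast
  have "finite K" "finite Co" using assms(5) \<open>Co \<subseteq> F\<close> finite_F finite_subset by blast+
  have card_Co: "card X = n - 1" if "X \<in> Co" for X
    using that four_le_n unfolding Co_def by auto
  then have excess_Co: "excess X = int n - 2" if "X \<in> Co" for X
    using that four_le_n unfolding excess_def by fastforce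
  have Co_large: "X \<notin> Co" if "2 * card X < n" for X
    using that card_Co[of X] four_le_n by auto
  have "K \<inter> Co = {}" using K_small Co_large by blast
  have "B \<subset> {1..n}" using member_subset[OF assms(3)] assms(4) by auto
  moreover have "K \<union> Co \<subseteq> F" using assms(5) \<open>Co \<subseteq> F\<close> by blast
  moreover have "{1..n} \<notin> K \<union> Co" "B \<notin> K \<union> Co"
    using assms(6,7) Co_large[of B] assms(4) card_Co[of "{1..n}"] four_le_n by auto
  ultimately have "2 * int (card B) + (\<Sum>X\<in>K \<union> Co. excess X) \<le> (\<Sum>X\<in>F. excess X)"
    by (rule excess_sum_ge_with_top[OF assms(3)]) (use small_cases in blast)
  moreover have "(\<Sum>X\<in>K \<union> Co. excess X) = (\<Sum>X\<in>K. excess X) + int (card Co) * (int n - 2)"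
    using \<open>K \<inter> Co = {}\<close> \<open>finite K\<close> \<open>finite Co\<close> excess_Co by (simp add: sum.union_disjoint)
  moreover have "int n - int (card B) - 1 \<le> int (card Co)"
    using card_coatoms_ge[OF assms(1-3)] unfolding Co_def by linarith
  then have "(int n - int (card B) - 1) * (int n - 2) \<le> int (card Co) * (int n - 2)"
    using four_le_n by (intro mult_right_mono) auto
  ultimately show ?thesis by linarith
qed

lemma family_below_gap_bounds:
  assumes "B \<in> F" "C \<in> F" "B \<subset> C" "C \<subset> {1..n}" "S \<subseteq> F" "\<And>X. X \<in> S \<Longrightarrow> X \<subset> B"
  shows "card S \<le> card B"
    and "int (card S) * excess B - 2 * int (card B) \<le> (\<Sum>X\<in>S. excess X)"
proof -
  have "finite B" "finite S" using assms(1,5) finite_member finite_F finite_subset by blast+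
  have pairwise: "X \<union> Y = B" if "X \<in> S" "Y \<in> S" "X \<noteq> Y" for X Y
    using Un_eq_of_two_above[of X Y B C "{1..n}"] that assms top_mem by blast
  have "card S \<le> (\<Sum>X\<in>S. card (B - X))"
    using card_le_sum_card_Diff[of B S] \<open>finite B\<close> assms(6) by blast
  also have "\<dots> \<le> card (B - {})"
    by (rule sum_card_Diff_le_of_pairwise_Un[OF \<open>finite B\<close> \<open>finite S\<close>]) (use pairwise in auto)
  finally show "card S \<le> card B" by simp
  show "int (card S) * excess B - 2 * int (card B) \<le> (\<Sum>X\<in>S. excess X)"
    using sum_excess_ge_of_pairwise_Un[OF assms(5) \<open>finite B\<close>, of "{}"] assms(6) pairwise
    by fastforce
qed

lemma excess_sum_nonneg_if_gap:
  assumes B_mem: "B \<in> F" and gap: "C \<in> F" "B \<subset> C" "C \<subset> {1..n}"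
    and small_subset: "\<And>X. X \<in> F \<Longrightarrow> 2 * card X < n \<Longrightarrow> X \<subseteq> B"
  shows "0 \<le> (\<Sum>X\<in>F. excess X)"
proof -
  define S where "S = {X \<in> F. 2 * card X < n \<and> X \<noteq> B}"
  have "S \<subseteq> F" and S_psubset: "\<And>X. X \<in> S \<Longrightarrow> X \<subset> B"
    unfolding S_def using small_subset by blast+
  note S_bounds = family_below_gap_bounds[OF B_mem gap \<open>S \<subseteq> F\<close> S_psubset]
  have "B \<subset> {1..n}" using gap by blast
  then have "{1..n} \<notin> S" "B \<notin> S" using S_psubset by blast+
  have S_cases: "X = B \<or> X \<in> S" if "X \<in> F" "2 * card X < n" for X
    using that unfolding S_def by blast
  show ?thesis
  proof (cases "0 \<le> excess B \<or> S = {}")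
    case True
    then have "0 \<le> int (card S) * excess B" by auto
    moreover have "2 * int (card B) + (\<Sum>X\<in>S. excess X) \<le> (\<Sum>X\<in>F. excess X)"
      by (rule excess_sum_ge_with_top[OF B_mem \<open>B \<subset> {1..n}\<close> \<open>S \<subseteq> F\<close> \<open>{1..n} \<notin> S\<close> \<open>B \<notin> S\<close> S_cases])
    ultimately show ?thesis using S_bounds(2) by linarith
  next
    case False
    then obtain A where "A \<in> S" by blast
    have "2 * card B < n" using False unfolding excess_def by simp
    have "2 * int (card B) + (\<Sum>X\<in>S. excess X) + (int n - int (card B) - 1) * (int n - 2)
        \<le> (\<Sum>X\<in>F. excess X)"
      by (rule excess_sum_ge_with_coatoms[OF _ S_psubset[OF \<open>A \<in> S\<close>] B_mem \<open>2 * card B < n\<close>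
            \<open>S \<subseteq> F\<close> \<open>{1..n} \<notin> S\<close> \<open>B \<notin> S\<close> _ S_cases])
        (use \<open>A \<in> S\<close> in \<open>auto simp: S_def\<close>)
    moreover have "0 \<le> int (card S) * (2 * int (card B) - int n) + (int n - int (card B) - 1) * (int n - 2)"
      using \<open>2 * card B < n\<close> S_bounds(1) four_le_n by (intro gap_excess_arith) auto
    ultimately show ?thesis using S_bounds(2) unfolding excess_def by linarith
  qed
qed

end

locale split_family = height_four_family +
  fixes z :: nat and S1 S2 :: "nat set" and m :: nat
  assumes S1_mem: "S1 \<in> F" and S2_mem: "S2 \<in> F" and disjoint: "S1 \<inter> S2 = {}"
    and z_mem: "z \<in> {1..n}" and Un_S1_S2: "S1 \<union> S2 = {1..n} - {z}"
    and card_S1: "card S1 = m" and card_S2: "card S2 = m"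
    and small_subset: "\<And>X. X \<in> F \<Longrightarrow> 2 * card X < n \<Longrightarrow> X \<subseteq> S1 \<union> S2"
begin

abbreviation B :: "nat set" where "B \<equiv> S1 \<union> S2"

lemma swapped: "split_family F n z S2 S1 m"
  by (rule split_family.intro[OF height_four_family_axioms], unfold_locales)
    (use S1_mem S2_mem disjoint z_mem Un_S1_S2 card_S1 card_S2 small_subset in auto)

lemma finite_S1: "finite S1" and finite_S2: "finite S2"
  using finite_member S1_mem S2_mem by blast+

lemma card_B: "card B = 2 * m"
  using card_Un_disjoint[OF finite_S1 finite_S2 disjoint] card_S1 card_S2 by simp

lemma n_eq: "n = 2 * m + 1"
  using card_B z_mem four_le_n unfolding Un_S1_S2 by simp

lemma two_le_m: "2 \<le> m"
  using n_eq four_le_n by linarith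

lemma S1_ne: "S1 \<noteq> {}" and S2_ne: "S2 \<noteq> {}"
  using card_S1 card_S2 two_le_m by auto

lemma B_mem: "B \<in> F"
  using Un_mem S1_mem S2_mem by blast

lemma B_psubset_top: "B \<subset> {1..n}"
  using z_mem Un_S1_S2 by blast

lemma S1_psubset_B: "S1 \<subset> B" and S2_psubset_B: "S2 \<subset> B"
  using disjoint S1_ne S2_ne by blast+

lemma excess_eq: "excess X = 2 * int (card X) - 2 * int m - 1"
  using n_eq unfolding excess_def by simp

lemma small_psubset_B:
  assumes "X \<in> F" "card X \<le> m"
  shows "X \<subset> B"
proof -
  have "X \<subseteq> B" using small_subset assms n_eq by simp
  moreover have "X \<noteq> B" using assms(2) card_B two_le_m by auto
  ultimately show ?thesis by blast
qed

lemma card_gt_if_S2_subset: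
  assumes "X \<subseteq> B" "S2 \<subseteq> X" "X \<inter> S1 \<noteq> {}"
  shows "m < card X"
proof -
  have "X = S2 \<union> (X \<inter> S1)" using assms(1,2) by blast
  then have "card X = m + card (X \<inter> S1)"
    using card_Un_disjoint[of S2 "X \<inter> S1"] finite_S1 finite_S2 disjoint card_S2 by auto
  moreover have "card (X \<inter> S1) \<noteq> 0" using assms(3) finite_S1 by simp
  ultimately show ?thesis by linarith
qed

lemma card_gt_if_S1_subset: "X \<subseteq> B \<Longrightarrow> S1 \<subseteq> X \<Longrightarrow> X \<inter> S2 \<noteq> {} \<Longrightarrow> m < card X"
  using split_family.card_gt_if_S2_subset[OF swapped, of X] by (simp add: Un_commute)

lemma lift_S2:
  assumes "X \<in> F" "X \<subseteq> B" "X \<inter> S1 \<noteq> {}" "\<not> S1 \<subseteq> X"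
  shows "S2 \<union> X \<in> F" "S2 \<subset> S2 \<union> X" "S2 \<union> X \<subset> B" "m < card (S2 \<union> X)"
    and "card (B - (S2 \<union> X)) < m"
proof -
  show "S2 \<union> X \<in> F" using Un_mem S2_mem assms(1) by blast
  show "S2 \<subset> S2 \<union> X" using assms(3) disjoint by blast
  show "S2 \<union> X \<subset> B" using assms(2,4) disjoint by blast
  then show "m < card (S2 \<union> X)" using card_gt_if_S2_subset[of "S2 \<union> X"] assms(3) by blast
  have "B - (S2 \<union> X) \<subset> S1" using assms(3) disjoint by blast
  then show "card (B - (S2 \<union> X)) < m" using psubset_card_mono[OF finite_S1] card_S1 by simp
qed

lemma lift_S1:
  assumes "X \<in> F" "X \<subseteq> B" "X \<inter> S2 \<noteq> {}" "\<not> S2 \<subseteq> X"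
  shows "S1 \<union> X \<in> F" "S1 \<subset> S1 \<union> X" "S1 \<union> X \<subset> B" "m < card (S1 \<union> X)"
    and "card (B - (S1 \<union> X)) < m"
  using split_family.lift_S2[OF swapped, unfolded Un_commute[of S2 S1], OF assms] by blast+

(* The lifts S2 \<union> X are members strictly between S2 and B, so any two of them have union B and
  their deficits in B are disjoint subsets of S1. *)
lemma sum_card_Diff_lift_S2_le:
  assumes "\<And>X. X \<in> G \<Longrightarrow> X \<in> F \<and> X \<subseteq> B \<and> X \<inter> S1 \<noteq> {} \<and> \<not> S1 \<subseteq> X"
  shows "(\<Sum>Y\<in>(\<lambda>X. S2 \<union> X) ` G. card (B - Y)) \<le> m"
proof -
  have "G \<subseteq> F" using assms by blast
  then have "finite G" using finite_F finite_subset by blast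
  have "(\<Sum>Y\<in>(\<lambda>X. S2 \<union> X) ` G. card (B - Y)) \<le> card (B - S2)"
  proof (rule sum_card_Diff_le_of_pairwise_Un)
    fix Y Y' assume "Y \<in> (\<lambda>X. S2 \<union> X) ` G" "Y' \<in> (\<lambda>X. S2 \<union> X) ` G" "Y \<noteq> Y'"
    then obtain X X' where "X \<in> G" "X' \<in> G" "Y = S2 \<union> X" "Y' = S2 \<union> X'"
      by blast
    have "X \<in> F" "X \<subseteq> B" "X \<inter> S1 \<noteq> {}" "\<not> S1 \<subseteq> X" using assms \<open>X \<in> G\<close> by blast+
    note lift_X = lift_S2[OF this]
    have "X' \<in> F" "X' \<subseteq> B" "X' \<inter> S1 \<noteq> {}" "\<not> S1 \<subseteq> X'" using assms \<open>X' \<in> G\<close> by blast+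
    note lift_X' = lift_S2[OF this]
    show "Y \<union> Y' = B"
      using Un_eq_of_common_below[OF S2_mem lift_X(1) lift_X'(1) B_mem top_mem _ lift_X(2) lift_X'(2)
          lift_X(3) lift_X'(3) B_psubset_top] \<open>Y \<noteq> Y'\<close> \<open>Y = S2 \<union> X\<close> \<open>Y' = S2 \<union> X'\<close>
      by blast
  qed (use finite_S1 finite_S2 \<open>finite G\<close> in auto)
  also have "card (B - S2) = m" using disjoint card_S1 by (simp add: Un_Diff Diff_triv)
  finally show ?thesis .
qed

lemma sum_card_Diff_lift_S1_le:
  assumes "\<And>X. X \<in> G \<Longrightarrow> X \<in> F \<and> X \<subseteq> B \<and> X \<inter> S2 \<noteq> {} \<and> \<not> S2 \<subseteq> X"
  shows "(\<Sum>Y\<in>(\<lambda>X. S1 \<union> X) ` G. card (B - Y)) \<le> m"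
  by (rule split_family.sum_card_Diff_lift_S2_le[OF swapped, unfolded Un_commute[of S2 S1]]) (fact assms)

lemma lift_S2_image:
  assumes "\<And>X. X \<in> G \<Longrightarrow> X \<in> F \<and> X \<subseteq> B \<and> X \<inter> S1 \<noteq> {} \<and> \<not> S1 \<subseteq> X"
    and "Y \<in> (\<lambda>X. S2 \<union> X) ` G"
  shows "Y \<in> F \<and> S2 \<subset> Y \<and> Y \<subset> B \<and> m < card Y"
proof -
  obtain X where "X \<in> G" and Y: "Y = S2 \<union> X" using assms(2) by blast
  then have "X \<in> F" "X \<subseteq> B" "X \<inter> S1 \<noteq> {}" "\<not> S1 \<subseteq> X" using assms(1) by blast+
  note lift = lift_S2[OF this]
  show ?thesis unfolding Y using lift by blast
qed

lemma lift_S1_image: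
  assumes "\<And>X. X \<in> G \<Longrightarrow> X \<in> F \<and> X \<subseteq> B \<and> X \<inter> S2 \<noteq> {} \<and> \<not> S2 \<subseteq> X"
    and "Y \<in> (\<lambda>X. S1 \<union> X) ` G"
  shows "Y \<in> F \<and> S1 \<subset> Y \<and> Y \<subset> B \<and> m < card Y"
  by (rule split_family.lift_S2_image[OF swapped, unfolded Un_commute[of S2 S1]]) (fact assms)+

lemma excess_sum_lift_S2_ge:
  assumes "\<And>X. X \<in> G \<Longrightarrow> X \<in> F \<and> X \<subseteq> B \<and> X \<inter> S1 \<noteq> {} \<and> \<not> S1 \<subseteq> X"
  shows "int (card ((\<lambda>X. S2 \<union> X) ` G)) * (2 * int m - 1) - 2 * int m
    \<le> (\<Sum>Y\<in>(\<lambda>X. S2 \<union> X) ` G. excess Y)"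
proof -
  have "(\<Sum>Y\<in>(\<lambda>X. S2 \<union> X) ` G. excess Y)
      = int (card ((\<lambda>X. S2 \<union> X) ` G)) * excess B - 2 * int (\<Sum>Y\<in>(\<lambda>X. S2 \<union> X) ` G. card (B - Y))"
    by (rule sum_excess_subsets) (use finite_S1 finite_S2 assms in auto)
  moreover have "excess B = 2 * int m - 1" by (simp add: excess_eq card_B)
  moreover have "(\<Sum>Y\<in>(\<lambda>X. S2 \<union> X) ` G. card (B - Y)) \<le> m"
    by (rule sum_card_Diff_lift_S2_le) (fact assms)
  ultimately show ?thesis by (simp del: of_nat_sum)
qed

lemma excess_sum_psubset_S1_ge:
  "- int (card {X \<in> F. X \<subset> S1}) - 2 * int m \<le> (\<Sum>X\<in>{X \<in> F. X \<subset> S1}. excess X)"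
proof -
  have "int (card {X \<in> F. X \<subset> S1}) * excess S1 - 2 * int (card (S1 - {}))
      \<le> (\<Sum>X\<in>{X \<in> F. X \<subset> S1}. excess X)"
  proof (rule sum_excess_ge_of_pairwise_Un[OF _ finite_S1])
    fix X Y assume "X \<in> {X \<in> F. X \<subset> S1}" "Y \<in> {X \<in> F. X \<subset> S1}" "X \<noteq> Y"
    then show "X \<union> Y = S1"
      by (intro Un_eq_of_two_above[of X Y S1 B "{1..n}"])
        (use S1_mem B_mem top_mem S1_psubset_B B_psubset_top in auto)
  qed auto
  moreover have "excess S1 = -1" by (simp add: excess_eq card_S1)
  ultimately show ?thesis using card_S1 by simp
qed

lemma excess_sum_ge_with_top_and_halves:
  assumes "K \<subseteq> F" "{1..n} \<notin> K" "B \<notin> K" "S1 \<notin> K" "S2 \<notin> K"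
    and small_cases: "\<And>X. X \<in> F \<Longrightarrow> card X \<le> m \<Longrightarrow> X \<in> K \<or> X = S1 \<or> X = S2"
  shows "4 * int m - 2 + (\<Sum>X\<in>K. excess X) \<le> (\<Sum>X\<in>F. excess X)"
proof -
  have "finite K" using assms(1) finite_F finite_subset by blast
  have "(\<Sum>X\<in>insert {1..n} (insert B (insert S1 (insert S2 K))). excess X) \<le> (\<Sum>X\<in>F. excess X)"
  proof (rule excess_sum_ge_subfamily)
    show "insert {1..n} (insert B (insert S1 (insert S2 K))) \<subseteq> F"
      using assms(1) top_mem B_mem S1_mem S2_mem by blast
    fix X assume "X \<in> F" "2 * card X < n"
    then have "card X \<le> m" using n_eq by simp
    then show "X \<in> insert {1..n} (insert B (insert S1 (insert S2 K)))"
      using small_cases \<open>X \<in> F\<close> by blast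
  qed
  moreover have "{1..n} \<noteq> B" "{1..n} \<noteq> S1" "{1..n} \<noteq> S2" "B \<noteq> S1" "B \<noteq> S2" "S1 \<noteq> S2"
    using B_psubset_top S1_psubset_B S2_psubset_B disjoint S1_ne by auto
  moreover have "excess {1..n} + excess B + excess S1 + excess S2 = 4 * int m - 2"
    unfolding excess_eq card_B card_S1 card_S2 using n_eq by simp
  ultimately show ?thesis using assms(2-5) \<open>finite K\<close> by (simp add: algebra_simps)
qed

lemma excess_sum_nonneg_if_empty_mem:
  assumes "{} \<in> F"
  shows "0 \<le> (\<Sum>X\<in>F. excess X)"
proof -
  have "X \<in> {{}} \<or> X = S1 \<or> X = S2" if "X \<in> F" "card X \<le> m" for X
  proof (rule ccontr)
    assume "\<not> ?thesis"
    then have "X \<noteq> {}" "X \<noteq> S1" by auto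
    have "X \<subset> B" using small_psubset_B that by blast
    with \<open>X \<noteq> {}\<close> have "X \<union> S1 = B"
      using Un_eq_of_common_below[OF assms that(1) S1_mem B_mem top_mem \<open>X \<noteq> S1\<close>]
        S1_ne S1_psubset_B B_psubset_top by blast
    then have "S2 \<subseteq> X" using disjoint by blast
    moreover have "finite X" using finite_member that(1) by blast
    ultimately have "S2 = X" using card_seteq that(2) card_S2 by metis
    with \<open>\<not> ?thesis\<close> show False by blast
  qed
  then have "4 * int m - 2 + (\<Sum>X\<in>{{}}. excess X) \<le> (\<Sum>X\<in>F. excess X)"
    by (intro excess_sum_ge_with_top_and_halves) (use assms S1_ne S2_ne B_psubset_top in auto)
  then show ?thesis using excess_eq[of "{}"] two_le_m by simp
qed

lemma small_cases_if_below_S1: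
  assumes "{} \<notin> F" "X0 \<in> F" "X0 \<subset> S1" and X: "X \<in> F" "card X \<le> m"
  shows "X \<subset> S1 \<or> X = S1 \<or> X = S2"
proof -
  have "X \<subset> B" using small_psubset_B X by blast
  consider "X \<inter> S2 = {}" | "X \<inter> S1 = {}" | "X \<inter> S1 \<noteq> {}" "X \<inter> S2 \<noteq> {}" by blast
  then show ?thesis
  proof cases
    case 1
    then show ?thesis using \<open>X \<subset> B\<close> by blast
  next
    case 2
    then have "X \<subseteq> S2" using \<open>X \<subset> B\<close> by blast
    have "X0 \<noteq> {}" using assms(1,2) by blast
    then have "X0 \<in> F" "X0 \<subseteq> B" "X0 \<inter> S1 \<noteq> {}" "\<not> S1 \<subseteq> X0" using assms(2,3) by blast+
    note lift_X0 = lift_S2[OF this]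
    have "\<not> X \<subset> S2"
      using no_strict_chain5[OF X(1) S2_mem lift_X0(1) B_mem top_mem _ lift_X0(2,3) B_psubset_top]
      by blast
    then show ?thesis using \<open>X \<subseteq> S2\<close> by auto
  next
    case 3
    have "\<not> S2 \<subseteq> X"
    proof
      assume "S2 \<subseteq> X"
      then have "m < card X" using card_gt_if_S2_subset[of X] \<open>X \<subset> B\<close> 3 by blast
      then show False using X(2) by simp
    qed
    then have "S1 \<subset> S1 \<union> X" "S1 \<union> X \<subset> B" using 3 \<open>X \<subset> B\<close> disjoint by blast+
    then show ?thesis
      using no_strict_chain5[OF assms(2) S1_mem Un_mem[OF S1_mem X(1)] B_mem top_mem assms(3)
          \<open>S1 \<subset> S1 \<union> X\<close> \<open>S1 \<union> X \<subset> B\<close> B_psubset_top] by blast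
  qed
qed

lemma excess_sum_nonneg_if_below_S1:
  assumes no_empty: "{} \<notin> F" and X0: "X0 \<in> F" "X0 \<subset> S1"
  shows "0 \<le> (\<Sum>X\<in>F. excess X)"
proof -
  define L where "L = {X \<in> F. X \<subset> S1}"
  define U where "U = (\<lambda>X. S2 \<union> X) ` L"
  have "L \<subseteq> F" unfolding L_def by blast
  then have "finite L" using finite_F finite_subset by blast
  then have "finite U" unfolding U_def by simp
  have L_liftable: "X \<in> F \<and> X \<subseteq> B \<and> X \<inter> S1 \<noteq> {} \<and> \<not> S1 \<subseteq> X" if "X \<in> L" for X
  proof -
    have "X \<in> F" "X \<subset> S1" using that unfolding L_def by blast+
    moreover have "X \<noteq> {}" using \<open>X \<in> F\<close> no_empty by blast
    ultimately show ?thesis by blast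
  qed
  have U_props: "Y \<in> F \<and> S2 \<subset> Y \<and> Y \<subset> B \<and> m < card Y" if "Y \<in> U" for Y
    using that unfolding U_def by (rule lift_S2_image[rotated]) (fact L_liftable)
  have sum_U: "int (card U) * (2 * int m - 1) - 2 * int m \<le> (\<Sum>Y\<in>U. excess Y)"
    unfolding U_def by (rule excess_sum_lift_S2_ge) (fact L_liftable)
  have "card U = card L"
    unfolding U_def by (rule card_image) (use disjoint in \<open>auto simp: inj_on_def L_def\<close>)
  have "X0 \<in> L" unfolding L_def using X0 by blast
  then have "1 \<le> card L" using \<open>finite L\<close> by (metis One_nat_def Suc_leI card_gt_0_iff empty_iff)
  have "X \<notin> U" if "X \<in> L" for X
  proof
    assume "X \<in> U"
    then have "S2 \<subseteq> X" using U_props by blast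
    moreover have "X \<subseteq> S1" using that unfolding L_def by blast
    ultimately show False using disjoint S2_ne by blast
  qed
  then have "L \<inter> U = {}" by blast
  have "L \<union> U \<subseteq> F" using \<open>L \<subseteq> F\<close> U_props by blast
  have "Y \<subset> B \<and> Y \<noteq> S1 \<and> Y \<noteq> S2" if "Y \<in> L \<union> U" for Y
    using that U_props S1_psubset_B disjoint S1_ne S2_ne unfolding L_def by blast
  then have "{1..n} \<notin> L \<union> U" "B \<notin> L \<union> U" "S1 \<notin> L \<union> U" "S2 \<notin> L \<union> U"
    using B_psubset_top by blast+
  moreover have "X \<in> L \<union> U \<or> X = S1 \<or> X = S2" if "X \<in> F" "card X \<le> m" for X
    using small_cases_if_below_S1[OF no_empty X0 that] that(1) unfolding L_def by blast
  ultimately have "4 * int m - 2 + (\<Sum>X\<in>L \<union> U. excess X) \<le> (\<Sum>X\<in>F. excess X)"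
    by (intro excess_sum_ge_with_top_and_halves[OF \<open>L \<union> U \<subseteq> F\<close>])
  moreover have "(\<Sum>X\<in>L \<union> U. excess X) = (\<Sum>X\<in>L. excess X) + (\<Sum>Y\<in>U. excess Y)"
    by (rule sum.union_disjoint[OF \<open>finite L\<close> \<open>finite U\<close> \<open>L \<inter> U = {}\<close>])
  moreover have "2 * int m - 2 \<le> int (card L) * (2 * int m - 2)"
    using mult_right_mono[of 1 "int (card L)" "2 * int m - 2"] \<open>1 \<le> card L\<close> two_le_m by simp
  moreover have "int (card L) * (2 * int m - 2) = int (card L) * (2 * int m - 1) - int (card L)"
    by (simp add: algebra_simps)
  ultimately show ?thesis
    using excess_sum_psubset_S1_ge sum_U two_le_m
    unfolding L_def[symmetric] \<open>card U = card L\<close> by linarith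
qed

definition crossing :: "nat set set" where
  "crossing = {X \<in> F. card X \<le> m \<and> X \<inter> S1 \<noteq> {} \<and> X \<inter> S2 \<noteq> {}}"

lemma crossing_props:
  assumes "X \<in> crossing"
  shows "card X \<le> m" "X \<subset> B"
    and "X \<in> F \<and> X \<subseteq> B \<and> X \<inter> S1 \<noteq> {} \<and> \<not> S1 \<subseteq> X"
    and "X \<in> F \<and> X \<subseteq> B \<and> X \<inter> S2 \<noteq> {} \<and> \<not> S2 \<subseteq> X"
proof -
  have X: "X \<in> F" "card X \<le> m" "X \<inter> S1 \<noteq> {}" "X \<inter> S2 \<noteq> {}"
    using assms unfolding crossing_def by blast+
  show "card X \<le> m" by (fact X(2))
  show "X \<subset> B" using small_psubset_B X(1,2) by blast
  then have "\<not> S1 \<subseteq> X" "\<not> S2 \<subseteq> X"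
    using card_gt_if_S1_subset[of X] card_gt_if_S2_subset[of X] X by fastforce+
  with X \<open>X \<subset> B\<close> show "X \<in> F \<and> X \<subseteq> B \<and> X \<inter> S1 \<noteq> {} \<and> \<not> S1 \<subseteq> X"
    "X \<in> F \<and> X \<subseteq> B \<and> X \<inter> S2 \<noteq> {} \<and> \<not> S2 \<subseteq> X" by blast+
qed

lemma small_cases_if_no_below:
  assumes "\<not> (\<exists>X\<in>F. X \<subset> S1)" "\<not> (\<exists>X\<in>F. X \<subset> S2)" and X: "X \<in> F" "card X \<le> m"
  shows "X \<in> crossing \<or> X = S1 \<or> X = S2"
proof -
  have "X \<subset> B" using small_psubset_B X by blast
  consider "X \<inter> S2 = {}" | "X \<inter> S1 = {}" | "X \<inter> S1 \<noteq> {}" "X \<inter> S2 \<noteq> {}" by blast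
  then show ?thesis
  proof cases
    case 1
    then have "X \<subseteq> S1" using \<open>X \<subset> B\<close> by blast
    then show ?thesis using assms(1) X(1) by blast
  next
    case 2
    then have "X \<subseteq> S2" using \<open>X \<subset> B\<close> by blast
    then show ?thesis using assms(2) X(1) by blast
  qed (use X in \<open>auto simp: crossing_def\<close>)
qed

lemma sum_card_Diff_crossing_le:
  defines "U1 \<equiv> (\<lambda>X. S2 \<union> X) ` crossing" and "U2 \<equiv> (\<lambda>X. S1 \<union> X) ` crossing"
  shows "(\<Sum>X\<in>crossing. card (B - X))
      \<le> card U2 * (\<Sum>Y\<in>U1. card (B - Y)) + card U1 * (\<Sum>Y\<in>U2. card (B - Y))"
    and "(\<Sum>X\<in>crossing. card (B - X)) \<le> card crossing * (2 * m - 2)"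
proof -
  have "crossing \<subseteq> F" unfolding crossing_def by blast
  then have "finite crossing" using finite_F finite_subset by blast
  have split: "card (B - X) = card (B - (S2 \<union> X)) + card (B - (S1 \<union> X))" if "X \<in> crossing" for X
  proof -
    have "B - X = (B - (S2 \<union> X)) \<union> (B - (S1 \<union> X))" "(B - (S2 \<union> X)) \<inter> (B - (S1 \<union> X)) = {}"
      using disjoint by blast+
    then show ?thesis using finite_S1 finite_S2 by (simp add: card_Un_disjoint)
  qed
  have recover: "(S2 \<union> X) \<inter> (S1 \<union> X) = X" if "X \<in> crossing" for X
    using crossing_props(2)[OF that] disjoint by blast
  have inj: "inj_on (\<lambda>X. (S2 \<union> X, S1 \<union> X)) crossing"
  proof (rule inj_onI)
    fix X Y assume "X \<in> crossing" "Y \<in> crossing" "(S2 \<union> X, S1 \<union> X) = (S2 \<union> Y, S1 \<union> Y)"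
    then have "(S2 \<union> X) \<inter> (S1 \<union> X) = (S2 \<union> Y) \<inter> (S1 \<union> Y)" by simp
    then show "X = Y" using recover \<open>X \<in> crossing\<close> \<open>Y \<in> crossing\<close> by simp
  qed
  have "(\<Sum>X\<in>crossing. card (B - X))
      = (\<Sum>X\<in>crossing. card (B - (S2 \<union> X))) + (\<Sum>X\<in>crossing. card (B - (S1 \<union> X)))"
    using split by (simp add: sum.distrib)
  also have "\<dots> \<le> card U2 * (\<Sum>Y\<in>U1. card (B - Y)) + card U1 * (\<Sum>Y\<in>U2. card (B - Y))"
    unfolding U1_def U2_def
    using sum_fst_le_card_snd_mult_sum[OF \<open>finite crossing\<close> inj, of "\<lambda>Y. card (B - Y)"]
      sum_snd_le_card_fst_mult_sum[OF \<open>finite crossing\<close> inj, of "\<lambda>Y. card (B - Y)"]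
    by linarith
  finally show "(\<Sum>X\<in>crossing. card (B - X))
      \<le> card U2 * (\<Sum>Y\<in>U1. card (B - Y)) + card U1 * (\<Sum>Y\<in>U2. card (B - Y))" .
  have "card (B - (S2 \<union> X)) < m" "card (B - (S1 \<union> X)) < m" if "X \<in> crossing" for X
    using lift_S2(5) lift_S1(5) crossing_props(3,4)[OF that] by blast+
  then have "(\<Sum>X\<in>crossing. card (B - X)) \<le> (\<Sum>X\<in>crossing. 2 * m - 2)"
    using split by (intro sum_mono) fastforce
  then show "(\<Sum>X\<in>crossing. card (B - X)) \<le> card crossing * (2 * m - 2)" by simp
qed

lemma excess_sum_ge_crossing_lifts:
  assumes small_cases: "\<And>X. X \<in> F \<Longrightarrow> card X \<le> m \<Longrightarrow> X \<in> crossing \<or> X = S1 \<or> X = S2"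
  defines "U1 \<equiv> (\<lambda>X. S2 \<union> X) ` crossing" and "U2 \<equiv> (\<lambda>X. S1 \<union> X) ` crossing"
  shows "4 * int m - 2 + (int (card crossing) + int (card U1) + int (card U2)) * (2 * int m - 1)
      - 2 * int (\<Sum>X\<in>crossing. card (B - X)) - 2 * int (\<Sum>Y\<in>U1. card (B - Y))
      - 2 * int (\<Sum>Y\<in>U2. card (B - Y)) \<le> (\<Sum>X\<in>F. excess X)"
proof -
  have "crossing \<subseteq> F" unfolding crossing_def by blast
  then have "finite crossing" using finite_F finite_subset by blast
  then have "finite U1" "finite U2" unfolding U1_def U2_def by simp_all
  have U1_props: "Y \<in> F \<and> S2 \<subset> Y \<and> Y \<subset> B \<and> m < card Y" if "Y \<in> U1" for Y
    using that unfolding U1_def by (rule lift_S2_image[rotated]) (fact crossing_props(3))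
  have U2_props: "Y \<in> F \<and> S1 \<subset> Y \<and> Y \<subset> B \<and> m < card Y" if "Y \<in> U2" for Y
    using that unfolding U2_def by (rule lift_S1_image[rotated]) (fact crossing_props(4))
  define K where "K = crossing \<union> U1 \<union> U2"
  have "K \<subseteq> F" unfolding K_def using \<open>crossing \<subseteq> F\<close> U1_props U2_props by blast
  have "Y \<subset> B \<and> Y \<noteq> S1 \<and> Y \<noteq> S2" if "Y \<in> K" for Y
    using that crossing_props U1_props U2_props disjoint S1_ne S2_ne unfolding K_def by blast
  then have "{1..n} \<notin> K" "B \<notin> K" "S1 \<notin> K" "S2 \<notin> K" using B_psubset_top by blast+
  then have base: "4 * int m - 2 + (\<Sum>X\<in>K. excess X) \<le> (\<Sum>X\<in>F. excess X)"
    using excess_sum_ge_with_top_and_halves[OF \<open>K \<subseteq> F\<close>] small_cases unfolding K_def by blast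
  have "X \<notin> U1" "X \<notin> U2" if "X \<in> crossing" for X
    using crossing_props(1)[OF that] U1_props U2_props by fastforce+
  then have "crossing \<inter> U1 = {}" "crossing \<inter> U2 = {}" by blast+
  moreover have "U1 \<inter> U2 = {}" using U1_props U2_props by blast
  ultimately have sum_K: "(\<Sum>X\<in>K. excess X)
      = (\<Sum>X\<in>crossing. excess X) + (\<Sum>Y\<in>U1. excess Y) + (\<Sum>Y\<in>U2. excess Y)"
    unfolding K_def using \<open>finite crossing\<close> \<open>finite U1\<close> \<open>finite U2\<close>
    by (simp add: sum.union_disjoint Int_Un_distrib2)
  have "finite B" using finite_S1 finite_S2 by blast
  have "excess B = 2 * int m - 1" by (simp add: excess_eq card_B)
  then have sum_eq: "(\<Sum>Y\<in>G. excess Y) = int (card G) * (2 * int m - 1) - 2 * int (\<Sum>Y\<in>G. card (B - Y))"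
    if "\<And>Y. Y \<in> G \<Longrightarrow> Y \<subseteq> B" for G
    using sum_excess_subsets[OF \<open>finite B\<close> that] by simp
  have "(\<Sum>X\<in>crossing. excess X)
      = int (card crossing) * (2 * int m - 1) - 2 * int (\<Sum>X\<in>crossing. card (B - X))"
    by (rule sum_eq) (use crossing_props(2) in blast)
  moreover have "(\<Sum>Y\<in>U1. excess Y) = int (card U1) * (2 * int m - 1) - 2 * int (\<Sum>Y\<in>U1. card (B - Y))"
    by (rule sum_eq) (use U1_props in blast)
  moreover have "(\<Sum>Y\<in>U2. excess Y) = int (card U2) * (2 * int m - 1) - 2 * int (\<Sum>Y\<in>U2. card (B - Y))"
    by (rule sum_eq) (use U2_props in blast)
  ultimately show ?thesis using base unfolding sum_K by (simp add: algebra_simps)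
qed

lemma excess_sum_nonneg_if_crossing:
  assumes no_below: "\<not> (\<exists>X\<in>F. X \<subset> S1)" "\<not> (\<exists>X\<in>F. X \<subset> S2)"
  shows "0 \<le> (\<Sum>X\<in>F. excess X)"
proof -
  note bound = excess_sum_ge_crossing_lifts[OF small_cases_if_no_below[OF no_below]]
  define U1 where "U1 = (\<lambda>X. S2 \<union> X) ` crossing"
  define U2 where "U2 = (\<lambda>X. S1 \<union> X) ` crossing"
  define g where "g = card crossing"
  define s where "s = (\<Sum>X\<in>crossing. card (B - X))"
  define e where "e = (\<Sum>Y\<in>U1. card (B - Y))"
  define f where "f = (\<Sum>Y\<in>U2. card (B - Y))"
  have "crossing \<subseteq> F" unfolding crossing_def by blast
  then have "finite crossing" using finite_F finite_subset by blast
  show ?thesis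
  proof (cases "crossing = {}")
    case True
    then show ?thesis using bound two_le_m by simp
  next
    case False
    then have U_pos: "1 \<le> card U1" "1 \<le> card U2"
      unfolding U1_def U2_def using \<open>finite crossing\<close> by (simp_all add: Suc_le_eq card_gt_0_iff)
    have U_le: "card U1 \<le> g" "card U2 \<le> g"
      unfolding U1_def U2_def g_def using card_image_le \<open>finite crossing\<close> by blast+
    have "e \<le> m" unfolding e_def U1_def
      by (rule sum_card_Diff_lift_S2_le) (fact crossing_props(3))
    moreover have "f \<le> m" unfolding f_def U2_def
      by (rule sum_card_Diff_lift_S1_le) (fact crossing_props(4))
    moreover have s_le: "s \<le> card U2 * e + card U1 * f" "s \<le> g * (2 * m - 2)"
      using sum_card_Diff_crossing_le[folded U1_def U2_def] unfolding s_def e_def f_def g_def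
      by simp_all
    have "int s \<le> int (card U2 * e + card U1 * f)" using s_le(1) by (simp only: of_nat_le_iff)
    moreover have "int s \<le> int (g * (2 * m - 2))" using s_le(2) by (simp only: of_nat_le_iff)
    then have "int s \<le> int g * (2 * int m - 2)" using two_le_m by (simp add: of_nat_diff)
    ultimately have "0 \<le> 4 * int m - 2 + (int g + int (card U1) + int (card U2)) * (2 * int m - 1)
        - 2 * int s - 2 * int e - 2 * int f"
      using two_le_m U_pos U_le by (intro crossing_excess_arith) simp_all
    then show ?thesis
      using bound unfolding U1_def[symmetric] U2_def[symmetric] g_def s_def e_def f_def by linarith
  qed
qed

lemma excess_sum_nonneg: "0 \<le> (\<Sum>X\<in>F. excess X)"
proof -
  consider "{} \<in> F" | "{} \<notin> F" "\<exists>X\<in>F. X \<subset> S1" | "{} \<notin> F" "\<exists>X\<in>F. X \<subset> S2"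
    | "\<not> (\<exists>X\<in>F. X \<subset> S1)" "\<not> (\<exists>X\<in>F. X \<subset> S2)"
    by blast
  then show ?thesis
  proof cases
    case 1
    then show ?thesis by (rule excess_sum_nonneg_if_empty_mem)
  next
    case 2
    then show ?thesis using excess_sum_nonneg_if_below_S1 by blast
  next
    case 3
    then show ?thesis using split_family.excess_sum_nonneg_if_below_S1[OF swapped] by blast
  next
    case 4
    then show ?thesis by (rule excess_sum_nonneg_if_crossing)
  qed
qed

end

context height_four_family
begin

lemma card_Union_small_le:
  assumes "C \<subseteq> F" "\<And>X. X \<in> C \<Longrightarrow> 2 * card X < n"
  shows "2 * card (\<Union>C) \<le> card C * (n - 1)"
proof -
  have "finite C" using assms(1) finite_F finite_subset by blast
  have "card (\<Union>C) \<le> (\<Sum>S\<in>C. card S)" by (rule card_Union_le_sum_card)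
  then have "2 * card (\<Union>C) \<le> (\<Sum>S\<in>C. 2 * card S)" by (simp add: sum_distrib_left[symmetric])
  also have "\<dots> \<le> (\<Sum>S\<in>C. n - 1)" using assms(2) by (intro sum_mono) fastforce
  finally show ?thesis by simp
qed

lemma split_family_if_cover_misses_one:
  assumes C: "C \<subseteq> F" "\<And>X. X \<in> C \<Longrightarrow> 2 * card X < n" "card C \<le> 2"
    and z: "{1..n} - \<Union>C = {z}"
    and small_subset: "\<And>X. X \<in> F \<Longrightarrow> 2 * card X < n \<Longrightarrow> X \<subseteq> \<Union>C"
  obtains S1 S2 m where "split_family F n z S1 S2 m"
proof -
  have "\<Union>C \<subseteq> {1..n}" using C(1) member_subset by blast
  with z have UC_eq: "\<Union>C = {1..n} - {z}" and "z \<in> {1..n}" by blast+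
  then have card_UC: "card (\<Union>C) = n - 1" by simp
  then have "2 * (n - 1) \<le> card C * (n - 1)" using card_Union_small_le[OF C(1,2)] by simp
  then have "card C = 2" using C(3) four_le_n by (cases "card C \<le> 1") (auto dest: mult_le_mono1)
  then obtain S1 S2 where C_eq: "C = {S1, S2}" "S1 \<noteq> S2" by (meson card_2_iff)
  have "finite S1" "finite S2" using C(1) C_eq finite_member by blast+
  have "card (S1 \<union> S2) + card (S1 \<inter> S2) = card S1 + card S2"
    by (rule card_Un_Int[OF \<open>finite S1\<close> \<open>finite S2\<close>, symmetric])
  moreover have "2 * card S1 < n" "2 * card S2 < n" "card (S1 \<union> S2) = n - 1"
    using C(2) C_eq card_UC by auto
  ultimately have "card (S1 \<inter> S2) = 0" "card S2 = card S1" by linarith+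
  then have "S1 \<inter> S2 = {}" using \<open>finite S1\<close> by simp
  show ?thesis
  proof (rule that, unfold_locales)
    show "S1 \<in> F" "S2 \<in> F" using C(1) C_eq by blast+
    show "S1 \<inter> S2 = {}" by fact
    show "z \<in> {1..n}" "S1 \<union> S2 = {1..n} - {z}" using \<open>z \<in> {1..n}\<close> UC_eq C_eq by simp_all
    show "card S1 = card S1" "card S2 = card S1" by (rule refl) fact
    show "\<And>X. X \<in> F \<Longrightarrow> 2 * card X < n \<Longrightarrow> X \<subseteq> S1 \<union> S2" using small_subset C_eq by simp
  qed
qed

lemma excess_sum_nonneg_if_cover:
  assumes C: "C \<subseteq> {X \<in> F. 2 * card X < n}" "\<Union>C = \<Union>{X \<in> F. 2 * card X < n}" "card C \<le> 2"
  shows "0 \<le> (\<Sum>X\<in>F. excess X)"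
proof (cases "{X \<in> F. 2 * card X < n} = {}")
  case True
  then have "0 \<le> excess X" if "X \<in> F" for X
    using that unfolding excess_def by fastforce
  then show ?thesis by (simp add: sum_nonneg)
next
  case False
  define B where "B = \<Union>C"
  have "B \<in> F"
    unfolding B_def C(2) by (rule union_closed_Union_mem[OF union_closed]) (use False in auto)
  have small_subset: "X \<subseteq> B" if "X \<in> F" "2 * card X < n" for X
    using that C(2) unfolding B_def by blast
  have C_sub: "C \<subseteq> F" and C_small: "\<And>X. X \<in> C \<Longrightarrow> 2 * card X < n" using C(1) by blast+
  then have "2 * card B \<le> 2 * (n - 1)"
    unfolding B_def using card_Union_small_le C(3) mult_le_mono1 order_trans by metis
  then have "B \<noteq> {1..n}" using four_le_n by auto
  moreover have "B \<subseteq> {1..n}" using member_subset \<open>B \<in> F\<close> by blast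
  ultimately obtain z where z: "z \<in> {1..n} - B" by blast
  show ?thesis
  proof (cases "{1..n} - B = {z}")
    case True
    obtain S1 S2 m where "split_family F n z S1 S2 m"
      using split_family_if_cover_misses_one[OF C_sub C_small C(3) True[unfolded B_def]]
        small_subset unfolding B_def by blast
    then show ?thesis by (rule split_family.excess_sum_nonneg)
  next
    case False
    with z obtain y where "y \<in> {1..n} - B" "y \<noteq> z" by blast
    then obtain C' where "C' \<in> F" "B \<subset> C'" "C' \<subset> {1..n}"
      using exists_between_if_two_missing[OF \<open>B \<in> F\<close> _ z] by blast
    then show ?thesis by (rule excess_sum_nonneg_if_gap[OF \<open>B \<in> F\<close> _ _ _ small_subset])
  qed
qed

end

theorem theorem2p1:
  fixes \<A> :: "nat set set" and n :: nat
  assumes "union_closed \<A>"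
    and "separating \<A>"
    and "\<Union>\<A> = {1..n}"
    and "height \<A> = 4"
    and "4 \<le> n"
    and "B_size \<A> \<le> 2"
  shows "Avg \<A> \<ge> real n / 2"
proof -
  interpret height_four_family \<A> n using assms(1-5) by unfold_locales
  have small_eq: "below \<A> (real n / 2) = {X \<in> \<A>. 2 * card X < n}"
    unfolding below_def by auto
  obtain C where "C \<subseteq> below \<A> (real n / 2)" "\<Union>C = \<Union>(below \<A> (real n / 2))" "card C \<le> 2"
    using B_size_cover[OF finite_F assms(6)] unfolding assms(3) by auto
  then have "0 \<le> (\<Sum>X\<in>\<A>. excess X)" unfolding small_eq by (rule excess_sum_nonneg_if_cover)
  moreover have "\<A> \<noteq> {}" using top_mem by blast
  ultimately show ?thesis
    using Avg_ge_half_if_excess_sum_nonneg[OF finite_F] unfolding excess_def by blast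
qed

end
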